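(* Let $\mathcal{A}$ be a complex Banach algebra with unity, $a,b,c,d\in\mathcal{A}$, and let $M$ be either $\begin{pmatrix}a&c\\0&b\end{pmatrix}$ or $\begin{pmatrix}a&0\\d&b\end{pmatrix}$ in $M_{2}(\mathcal{A})$. Then: (1) $a\in\mathcal{A}^{qnil}$ and $b\in\mathcal{A}^{qnil}$ if and only if $M\in M_{2}(\mathcal{A})^{qnil}$; (2) $a$ and $b$ are g$\pi$-Hirano invertible in $\mathcal{A}$ if and only if $M$ is g$\pi$-Hirano invertible in $M_{2}(\mathcal{A})$.
   Context: $M_{2}(\mathcal{A})$ is the Banach algebra of $2\times2$ matrices over $\mathcal{A}$. For a unital Banach algebra $\mathcal{B}$, $\mathcal{B}^{qnil}$ is the set of elements with spectrum $\{0\}$, and $a\in\mathcal{B}$ is g$\pi$-Hirano invertible if there exists $x\in\mathcal{B}$ with $xax=x$, $ax=xa$ and $a-a^{n+2}x\in\mathcal{B}^{qnil}$ for some positive integer $n$. *)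

theory Defs
  imports "HOL-Analysis.Analysis"
begin

text \<open>HOL has no class of complex vector spaces, so complex scalar
multiplication is added explicitly.\<close>

class calg_1 = ring_1 +
  fixes cscale :: "complex \<Rightarrow> 'a \<Rightarrow> 'a"
  assumes cscale_add_right: "cscale c (x + y) = cscale c x + cscale c y"
    and cscale_add_left: "cscale (c + e) x = cscale c x + cscale e x"
    and cscale_cscale: "cscale c (cscale e x) = cscale (c * e) x"
    and cscale_one: "cscale 1 x = x"
    and mult_cscale_left: "cscale c x * y = cscale c (x * y)"
    and mult_cscale_right: "x * cscale c y = cscale c (x * y)"

class cbanach_algebra_1 = calg_1 + real_normed_algebra_1 + banach +
  assumes scaleR_cscale: "scaleR r x = cscale (complex_of_real r) x"
    and norm_cscale: "norm (cscale c x) = cmod c * norm x"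

definition ring_invertible :: "'a::ring_1 \<Rightarrow> bool" where
  "ring_invertible x \<longleftrightarrow> (\<exists>y. x * y = 1 \<and> y * x = 1)"

definition cspectrum :: "'a::calg_1 \<Rightarrow> complex set" where
  "cspectrum a = {z. \<not> ring_invertible (a - cscale z 1)}"

definition qnil :: "'a::calg_1 \<Rightarrow> bool" where
  "qnil a \<longleftrightarrow> cspectrum a = {0}"

definition gpi_hirano :: "'a::calg_1 \<Rightarrow> bool" where
  "gpi_hirano a \<longleftrightarrow> (\<exists>x. x * a * x = x \<and> a * x = x * a \<and>
      (\<exists>n::nat. n > 0 \<and> qnil (a - a ^ (n + 2) * x)))"

datatype 'a m2 = M2 'a 'a 'a 'a  (* M2 a11 a12 a21 a22 *)

instantiation m2 :: (ring_1) ring_1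
begin
definition "0 = M2 0 0 0 0"
definition "1 = M2 1 0 0 1"
fun plus_m2 where "M2 a b c d + M2 e f g h = M2 (a + e) (b + f) (c + g) (d + h)"
fun minus_m2 where "M2 a b c d - M2 e f g h = M2 (a - e) (b - f) (c - g) (d - h)"
fun uminus_m2 where "- M2 a b c d = M2 (- a) (- b) (- c) (- d)"
fun times_m2 where "M2 a b c d * M2 e f g h =
  M2 (a * e + b * g) (a * f + b * h) (c * e + d * g) (c * f + d * h)"
instance
proof
  fix x y z :: "'a m2"
  show "x * y * z = x * (y * z)"
    by (cases x; cases y; cases z) (simp add: algebra_simps)
  show "x + y + z = x + (y + z)" by (cases x; cases y; cases z) (simp add: algebra_simps)
  show "x + y = y + x" by (cases x; cases y) (simp add: algebra_simps)
  show "0 + x = x" by (cases x) (simp add: zero_m2_def)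
  show "- x + x = 0" by (cases x) (simp add: zero_m2_def)
  show "x - y = x + - y" by (cases x; cases y) simp
  show "(x + y) * z = x * z + y * z" by (cases x; cases y; cases z) (simp add: algebra_simps)
  show "x * (y + z) = x * y + x * z" by (cases x; cases y; cases z) (simp add: algebra_simps)
  show "1 * x = x" by (cases x) (simp add: one_m2_def)
  show "x * 1 = x" by (cases x) (simp add: one_m2_def)
  show "(0::'a m2) \<noteq> 1" by (simp add: zero_m2_def one_m2_def)
qed
end

instantiation m2 :: (calg_1) calg_1
begin
fun cscale_m2 where "cscale_m2 k (M2 a b c d) = M2 (cscale k a) (cscale k b) (cscale k c) (cscale k d)"
instance
proof
  fix x y :: "'a m2" and c e :: complex
  show "cscale c (x + y) = cscale c x + cscale c y"
    by (cases x; cases y) (simp add: cscale_add_right)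
  show "cscale (c + e) x = cscale c x + cscale e x"
    by (cases x) (simp add: cscale_add_left)
  show "cscale c (cscale e x) = cscale (c * e) x"
    by (cases x) (simp add: cscale_cscale)
  show "cscale 1 x = x" by (cases x) (simp add: cscale_one)
  show "cscale c x * y = cscale c (x * y)"
    by (cases x; cases y) (simp add: mult_cscale_left cscale_add_right)
  show "x * cscale c y = cscale c (x * y)"
    by (cases x; cases y) (simp add: mult_cscale_right cscale_add_right)
qed
end

end

theory Submission
  imports Defs "HOL-Computational_Algebra.Formal_Power_Series"
begin

text \<open>
  Two characterisations carry the proof. First, an element \<open>x\<close> of a complex Banach algebra is
  quasinilpotent iff \<open>\<rho>\<^sup>n \<parallel>x\<^sup>n\<parallel> \<longrightarrow> 0\<close> for every \<open>\<rho>\<close>: one direction is the Neumann series, the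
  other is Rickart's elementary proof of the spectral radius formula, averaging the resolvent
  over roots of unity. Second, \<open>a\<close> is g\<pi>-Hirano invertible iff \<open>a - a\<^sup>n\<^sup>+\<^sup>1\<close> is quasinilpotent for
  some \<open>n > 0\<close>; for the converse, \<open>a\<^sup>n\<close> is an idempotent modulo quasinilpotents and is lifted to a
  genuine idempotent \<open>e = a x\<close> with the binomial series of \<open>(1 + t)\<^sup>-\<^sup>1\<^sup>/\<^sup>2\<close>.

  For a triangular matrix \<open>M\<close> with diagonal \<open>a, b\<close>, the powers \<open>M\<^sup>n\<close> are triangular with diagonal
  \<open>a\<^sup>n, b\<^sup>n\<close>, so \<open>\<parallel>a\<^sup>n\<parallel>, \<parallel>b\<^sup>n\<parallel> \<le> \<parallel>M\<^sup>n\<parallel>\<close>; conversely \<open>M - \<lambda>\<close> is invertible whenever \<open>a - \<lambda>\<close> and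
  \<open>b - \<lambda>\<close> are. This settles quasinilpotence, and applied to \<open>M - M\<^sup>n\<^sup>+\<^sup>1\<close> it settles
  g\<pi>-Hirano invertibility.
\<close>

section \<open>Complex scalars, inverses and commutants\<close>

lemma cscale_zero_right [simp]: "cscale c (0::'a::calg_1) = 0"
  using cscale_add_right[of c "0::'a" 0] by simp

lemma cscale_zero_left [simp]: "cscale 0 (x::'a::calg_1) = 0"
  using cscale_add_left[of 0 0 x] by simp

lemma cscale_minus_left: "cscale (- c) x = - cscale c (x::'a::calg_1)"
  using cscale_add_left[of "- c" c x] by (simp add: eq_neg_iff_add_eq_0)

lemma cscale_minus_right: "cscale c (- x) = - cscale c (x::'a::calg_1)"
  using cscale_add_right[of c "- x" x] by (simp add: eq_neg_iff_add_eq_0)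

lemma cscale_diff_left: "cscale (c - e) x = cscale c x - cscale e (x::'a::calg_1)"
  by (simp only: diff_conv_add_uminus cscale_add_left cscale_minus_left)

lemma cscale_diff_right: "cscale c (x - y) = cscale c x - cscale c (y::'a::calg_1)"
  by (simp only: diff_conv_add_uminus cscale_add_right cscale_minus_right)

lemma cscale_sum_left: "cscale (sum f A) (x::'a::calg_1) = (\<Sum>i\<in>A. cscale (f i) x)"
  by (induct A rule: infinite_finite_induct) (auto simp: cscale_add_left)

lemma cscale_power: "cscale c x ^ n = cscale (c ^ n) (x ^ n :: 'a::calg_1)"
  by (induct n) (simp_all add: cscale_one mult_cscale_left mult_cscale_right cscale_cscale mult.commute)

lemma power_mult_commuting:
  fixes x y :: "'a::monoid_mult"
  assumes "x * y = y * x"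
  shows "(x * y) ^ n = x ^ n * y ^ n"
proof (induct n)
  case (Suc n)
  have "(x * y) ^ Suc n = x * (y * x ^ n) * y ^ n"
    using Suc by (simp add: mult.assoc)
  also have "y * x ^ n = x ^ n * y"
    using power_commuting_commutes[OF assms] by simp
  finally show ?case by (simp add: mult.assoc)
qed simp

lemma one_minus_times_geometric_sum:
  fixes z :: "'a::ring_1"
  shows "(1 - z) * (\<Sum>j<n. z ^ j) = 1 - z ^ n" and "(\<Sum>j<n. z ^ j) * (1 - z) = 1 - z ^ n"
proof -
  have "(1 - z) * (\<Sum>j<n. z ^ j) = (\<Sum>j<n. z ^ j - z ^ Suc j)"
    by (simp add: sum_distrib_left left_diff_distrib sum_subtractf)
  also have "\<dots> = 1 - z ^ n" by (subst sum_lessThan_telescope') simp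
  finally show "(1 - z) * (\<Sum>j<n. z ^ j) = 1 - z ^ n" .
  have "(\<Sum>j<n. z ^ j) * (1 - z) = (\<Sum>j<n. z ^ j - z ^ Suc j)"
    by (simp add: sum_distrib_right right_diff_distrib power_commutes sum_subtractf)
  also have "\<dots> = 1 - z ^ n" by (subst sum_lessThan_telescope') simp
  finally show "(\<Sum>j<n. z ^ j) * (1 - z) = 1 - z ^ n" .
qed

lemma diff_power_times_geometric_sum:
  fixes a :: "'a::ring_1"
  shows "(a - a ^ (n + 1)) * (\<Sum>j<k. a ^ (n * j)) = a - a ^ (n * k + 1)"
proof -
  have "(a - a ^ (n + 1)) * (\<Sum>j<k. a ^ (n * j)) = (\<Sum>j<k. a ^ (n * j + 1) - a ^ (n * Suc j + 1))"
    by (simp add: sum_distrib_left algebra_simps power_add power_commutes)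
  also have "\<dots> = a - a ^ (n * k + 1)"
    by (simp only: sum_lessThan_telescope'[where f = "\<lambda>j. a ^ (n * j + 1)"]) simp
  finally show ?thesis .
qed

lemma ring_invertibleI: "x * y = 1 \<Longrightarrow> y * x = 1 \<Longrightarrow> ring_invertible (x::'a::ring_1)"
  unfolding ring_invertible_def by blast

lemma ring_invertible_cscale_iff:
  assumes "c \<noteq> 0"
  shows "ring_invertible (cscale c y) \<longleftrightarrow> ring_invertible (y::'a::calg_1)"
proof -
  have scale: "ring_invertible (cscale k z)" if k: "k \<noteq> 0" and z: "ring_invertible z"
    for k and z :: 'a
  proof -
    obtain v where "z * v = 1" "v * z = 1" using z unfolding ring_invertible_def by blast
    with k show ?thesis
      by (intro ring_invertibleI[of _ "cscale (1 / k) v"])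
        (simp_all add: mult_cscale_left mult_cscale_right cscale_cscale cscale_one)
  qed
  have "y = cscale (1 / c) (cscale c y)" using assms by (simp add: cscale_cscale cscale_one)
  then show ?thesis using scale[of c y] scale[of "1 / c" "cscale c y"] assms by auto
qed

definition ring_inverse :: "'a::ring_1 \<Rightarrow> 'a" where
  "ring_inverse x = (SOME y. x * y = 1 \<and> y * x = 1)"

lemma mult_ring_inverse: "ring_invertible x \<Longrightarrow> x * ring_inverse x = 1 \<and> ring_inverse x * x = 1"
  unfolding ring_invertible_def ring_inverse_def by (rule someI_ex)

lemma inverse_commute:
  fixes x z v :: "'a::ring_1"
  assumes "x * z = z * x" "x * v = 1" "v * x = 1"
  shows "v * z = z * v"
proof -
  have "v * z = v * (z * x) * v" using assms(2) by (simp add: mult.assoc)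
  also have "\<dots> = (v * x) * z * v" using assms(1) by (simp add: mult.assoc)
  finally show ?thesis using assms(3) by simp
qed

lemma ring_invertible_commuting_factor:
  fixes x y :: "'a::ring_1"
  assumes "ring_invertible (x * y)" "x * y = y * x"
  shows "ring_invertible x"
proof -
  obtain w where w: "x * y * w = 1" "w * (x * y) = 1"
    using assms(1) unfolding ring_invertible_def by blast
  have "(x * y) * x = x * (x * y)" using assms(2) by (simp add: mult.assoc[symmetric])
  then have wx: "w * x = x * w" using inverse_commute w by metis
  show ?thesis
  proof (rule ring_invertibleI)
    show "x * (y * w) = 1" using w(1) by (simp add: mult.assoc)
    have "(y * w) * x = (y * x) * w" using wx by (simp add: mult.assoc)
    then show "(y * w) * x = 1" using assms(2) w(1) by simp
  qed
qed

definition commutant :: "'a::ring_1 set \<Rightarrow> 'a set" where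
  "commutant S = {z. \<forall>s\<in>S. z * s = s * z}"

abbreviation bicommutant :: "'a::ring_1 set \<Rightarrow> 'a set" where
  "bicommutant S \<equiv> commutant (commutant S)"

lemma commutant_one [simp]: "1 \<in> commutant S"
  and commutant_zero [simp]: "0 \<in> commutant S"
  unfolding commutant_def by auto

lemma commutant_mult: "y \<in> commutant S \<Longrightarrow> z \<in> commutant S \<Longrightarrow> y * z \<in> commutant S"
  unfolding commutant_def by (simp add: mult.assoc) (metis mult.assoc)

lemma commutant_add: "y \<in> commutant S \<Longrightarrow> z \<in> commutant S \<Longrightarrow> y + z \<in> commutant S"
  unfolding commutant_def by (simp add: distrib_left distrib_right)

lemma commutant_diff: "y \<in> commutant S \<Longrightarrow> z \<in> commutant S \<Longrightarrow> y - z \<in> commutant S"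
  unfolding commutant_def by (simp add: left_diff_distrib right_diff_distrib)

lemma commutant_power: "y \<in> commutant S \<Longrightarrow> y ^ n \<in> commutant S"
  by (induct n) (simp_all add: commutant_mult)

lemma commutant_sum: "(\<And>i. i \<in> A \<Longrightarrow> f i \<in> commutant S) \<Longrightarrow> sum f A \<in> commutant S"
  by (induct A rule: infinite_finite_induct) (simp_all add: commutant_add)

lemma commutant_scaleR:
  "y \<in> commutant S \<Longrightarrow> scaleR c (y::'a::real_normed_algebra_1) \<in> commutant S"
  unfolding commutant_def by simp

lemma commutant_ring_inverse:
  "y \<in> commutant S \<Longrightarrow> ring_invertible y \<Longrightarrow> ring_inverse y \<in> commutant S"
  unfolding commutant_def using inverse_commute mult_ring_inverse by blast

lemma commutant_suminf:
  fixes f :: "nat \<Rightarrow> 'a::{real_normed_algebra_1,banach}"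
  assumes "summable f" "\<And>n. f n \<in> commutant S"
  shows "suminf f \<in> commutant S"
  unfolding commutant_def
proof (intro CollectI ballI)
  fix s assume "s \<in> S"
  then have "f n * s = s * f n" for n using assms(2) unfolding commutant_def by blast
  then show "suminf f * s = s * suminf f"
    using suminf_mult2[OF assms(1), of s] suminf_mult[OF assms(1), of s] by simp
qed

lemma subset_bicommutant: "S \<subseteq> bicommutant S"
  unfolding commutant_def by auto

lemma bicommutant_commute:
  assumes "\<And>s t. s \<in> S \<Longrightarrow> t \<in> S \<Longrightarrow> s * t = t * s"
    and "y \<in> bicommutant S" "z \<in> bicommutant S"
  shows "y * z = z * y"
proof -
  have "z \<in> commutant S" using assms(1,3) unfolding commutant_def by blast
  then show ?thesis using assms(2) unfolding commutant_def by blast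
qed

lemma bicommutant_singleton_commute:
  "y \<in> bicommutant {a} \<Longrightarrow> z \<in> bicommutant {a} \<Longrightarrow> y * z = z * y"
  by (rule bicommutant_commute) auto

lemma bicommutant_singleton_subset: "f \<in> bicommutant S \<Longrightarrow> bicommutant {f} \<subseteq> bicommutant S"
  unfolding commutant_def by auto

section \<open>Topologically nilpotent elements\<close>

text \<open>Equivalently \<open>\<parallel>x ^ n\<parallel> ^ (1 / n) \<longrightarrow> 0\<close>, i.e. the spectral radius of \<open>x\<close> is zero.\<close>

definition topologically_nilpotent :: "'a::real_normed_algebra_1 \<Rightarrow> bool" where
  "topologically_nilpotent x \<longleftrightarrow> (\<forall>\<rho>\<ge>0. (\<lambda>n. \<rho> ^ n * norm (x ^ n)) \<longlonglongrightarrow> 0)"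

lemma topologically_nilpotentD:
  "topologically_nilpotent x \<Longrightarrow> \<rho> \<ge> 0 \<Longrightarrow> (\<lambda>n. \<rho> ^ n * norm (x ^ n)) \<longlonglongrightarrow> 0"
  unfolding topologically_nilpotent_def by blast

lemma topologically_nilpotent_eventually_less:
  "topologically_nilpotent x \<Longrightarrow> \<rho> \<ge> 0 \<Longrightarrow> \<epsilon> > 0 \<Longrightarrow>
    \<forall>\<^sub>F n in sequentially. \<rho> ^ n * norm (x ^ n) < \<epsilon>"
  using order_tendstoD(2) topologically_nilpotentD by blast

lemma topologically_nilpotent_summable:
  assumes "topologically_nilpotent x" "\<rho> \<ge> 0"
  shows "summable (\<lambda>n. \<rho> ^ n * norm (x ^ n))"
proof (rule summable_comparison_test_ev)
  show "summable (\<lambda>n. (1/2::real) ^ n)" by (rule summable_geometric) simp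
  have "\<forall>\<^sub>F n in sequentially. (2 * \<rho>) ^ n * norm (x ^ n) < 1"
    using topologically_nilpotent_eventually_less[OF assms(1), of "2 * \<rho>" 1] assms(2) by simp
  then show "\<forall>\<^sub>F n in sequentially. norm (\<rho> ^ n * norm (x ^ n)) \<le> (1/2) ^ n"
  proof eventually_elim
    case (elim n)
    have "norm (\<rho> ^ n * norm (x ^ n)) = (1/2 * (2 * \<rho>)) ^ n * norm (x ^ n)"
      using assms(2) by simp
    also have "\<dots> = (1/2) ^ n * ((2 * \<rho>) ^ n * norm (x ^ n))"
      by (simp only: power_mult_distrib mult.assoc)
    also have "\<dots> \<le> (1/2) ^ n * 1" using elim by (intro mult_left_mono) auto
    finally show ?case by simp
  qed
qed

lemma topologically_nilpotent_le:
  assumes "topologically_nilpotent x" "C \<ge> 0" "\<And>n. norm (y ^ n) \<le> C ^ n * norm (x ^ n)"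
  shows "topologically_nilpotent y"
  unfolding topologically_nilpotent_def
proof (intro allI impI)
  fix \<rho> :: real assume \<rho>: "\<rho> \<ge> 0"
  have "\<forall>\<^sub>F n in sequentially. norm (\<rho> ^ n * norm (y ^ n)) \<le> (\<rho> * C) ^ n * norm (x ^ n)"
    using \<rho> assms(3) by (simp add: power_mult_distrib mult.assoc mult_left_mono)
  moreover have "(\<lambda>n. (\<rho> * C) ^ n * norm (x ^ n)) \<longlonglongrightarrow> 0"
    using topologically_nilpotentD[OF assms(1)] \<rho> assms(2) by simp
  ultimately show "(\<lambda>n. \<rho> ^ n * norm (y ^ n)) \<longlonglongrightarrow> 0"
    by (rule Lim_null_comparison)
qed

lemma topologically_nilpotent_scaleR:
  "topologically_nilpotent x \<Longrightarrow> topologically_nilpotent (scaleR c x)"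
  by (rule topologically_nilpotent_le[of x "\<bar>c\<bar>"]) (simp_all add: power_abs)

lemma topologically_nilpotent_mult_commuting:
  assumes "topologically_nilpotent x" "x * z = z * x"
  shows "topologically_nilpotent (x * z)" and "topologically_nilpotent (z * x)"
proof -
  have "norm ((x * z) ^ n) \<le> norm z ^ n * norm (x ^ n)" for n
  proof -
    have "norm ((x * z) ^ n) \<le> norm (x ^ n) * norm (z ^ n)"
      unfolding power_mult_commuting[OF assms(2)] by (rule norm_mult_ineq)
    also have "\<dots> \<le> norm (x ^ n) * norm z ^ n" by (intro mult_left_mono norm_power_ineq) simp
    finally show ?thesis by (simp add: mult.commute)
  qed
  then show "topologically_nilpotent (x * z)"
    by (rule topologically_nilpotent_le[OF assms(1) norm_ge_zero])
  then show "topologically_nilpotent (z * x)" using assms(2) by simp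
qed

lemma power_add_orthogonal:
  fixes u v :: "'a::ring_1"
  assumes "u * v = 0" "v * u = 0"
  shows "(u + v) ^ Suc n = u ^ Suc n + v ^ Suc n"
proof (induct n)
  case (Suc n)
  have "(u + v) ^ Suc (Suc n) = (u + v) * (u ^ Suc n + v ^ Suc n)" using Suc by simp
  also have "\<dots> = u ^ Suc (Suc n) + v ^ Suc (Suc n) + (u * v) * v ^ n + (v * u) * u ^ n"
    by (simp add: algebra_simps)
  finally show ?case using assms by simp
qed simp

lemma topologically_nilpotent_add_orthogonal:
  assumes "topologically_nilpotent u" "topologically_nilpotent v" "u * v = 0" "v * u = 0"
  shows "topologically_nilpotent (u + v)"
  unfolding topologically_nilpotent_def
proof (intro allI impI)
  fix \<rho> :: real assume \<rho>: "\<rho> \<ge> 0"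
  have "norm (\<rho> ^ n * norm ((u + v) ^ n)) \<le> \<rho> ^ n * norm (u ^ n) + \<rho> ^ n * norm (v ^ n)"
    if "n > 0" for n
  proof -
    obtain m where "n = Suc m" using \<open>n > 0\<close> gr0_implies_Suc by blast
    then have "norm ((u + v) ^ n) \<le> norm (u ^ n) + norm (v ^ n)"
      using power_add_orthogonal[OF assms(3,4)] norm_triangle_ineq by metis
    then show ?thesis using \<rho> by (simp add: distrib_left[symmetric] mult_left_mono)
  qed
  then have "\<forall>\<^sub>F n in sequentially.
      norm (\<rho> ^ n * norm ((u + v) ^ n)) \<le> \<rho> ^ n * norm (u ^ n) + \<rho> ^ n * norm (v ^ n)"
    using eventually_gt_at_top[of 0] by (rule eventually_mono[rotated])
  moreover have "(\<lambda>n. \<rho> ^ n * norm (u ^ n) + \<rho> ^ n * norm (v ^ n)) \<longlonglongrightarrow> 0"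
    using tendsto_add[OF topologically_nilpotentD[OF assms(1) \<rho>] topologically_nilpotentD[OF assms(2) \<rho>]]
    by simp
  ultimately show "(\<lambda>n. \<rho> ^ n * norm ((u + v) ^ n)) \<longlonglongrightarrow> 0"
    by (rule Lim_null_comparison)
qed

lemma topologically_nilpotent_not_invertible:
  assumes "topologically_nilpotent x"
  shows "\<not> ring_invertible x"
proof
  assume "ring_invertible x"
  then obtain v where "x * v = 1" unfolding ring_invertible_def by blast
  then have "1 \<le> norm v ^ n * norm (x ^ n)" for n
    using left_right_inverse_power[of x v n] norm_mult_ineq[of "x ^ n" "v ^ n"]
      mult_left_mono[OF norm_power_ineq[of v n], of "norm (x ^ n)"]
    by (simp add: mult.commute)
  moreover obtain N where "norm v ^ N * norm (x ^ N) < 1"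
    using topologically_nilpotent_eventually_less[OF assms, of "norm v" 1]
    unfolding eventually_sequentially by auto
  ultimately show False by (meson not_le)
qed

section \<open>Quasinilpotence and the spectral radius\<close>

lemma neumann_series:
  fixes y :: "'a::{real_normed_algebra_1,banach}"
  assumes "summable (\<lambda>n. norm (y ^ n))"
  shows "(1 - y) * (\<Sum>n. y ^ n) = 1" "(\<Sum>n. y ^ n) * (1 - y) = 1"
proof -
  have s: "summable (\<lambda>n. y ^ n)" using assms by (rule summable_norm_cancel)
  have t: "(\<lambda>n. y ^ n - y ^ Suc n) sums 1"
    using telescope_sums'[OF summable_LIMSEQ_zero[OF s]] by simp
  have "(1 - y) * (\<Sum>n. y ^ n) = (\<Sum>n. (1 - y) * y ^ n)" by (rule suminf_mult[OF s, symmetric])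
  also have "\<dots> = (\<Sum>n. y ^ n - y ^ Suc n)" by (simp add: algebra_simps)
  finally show "(1 - y) * (\<Sum>n. y ^ n) = 1" using t sums_unique by metis
  have "(\<Sum>n. y ^ n) * (1 - y) = (\<Sum>n. y ^ n * (1 - y))" by (rule suminf_mult2[OF s])
  also have "\<dots> = (\<Sum>n. y ^ n - y ^ Suc n)" by (simp add: algebra_simps power_commutes)
  finally show "(\<Sum>n. y ^ n) * (1 - y) = 1" using t sums_unique by metis
qed

lemma spectrum_subset_zero_iff:
  "cspectrum x \<subseteq> {0} \<longleftrightarrow> (\<forall>\<mu>. ring_invertible (1 - cscale \<mu> (x::'a::calg_1)))"
proof -
  have "ring_invertible (x - cscale l 1) \<longleftrightarrow> ring_invertible (1 - cscale (1 / l) x)"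
    if "l \<noteq> 0" for l
  proof -
    have "x - cscale l 1 = cscale (- l) (1 - cscale (1 / l) x)"
      using that by (simp add: cscale_diff_right cscale_cscale cscale_minus_left cscale_one)
    then show ?thesis using ring_invertible_cscale_iff[of "- l"] that by simp
  qed
  then have "cspectrum x \<subseteq> {0} \<longleftrightarrow> (\<forall>l. l \<noteq> 0 \<longrightarrow> ring_invertible (1 - cscale (1 / l) x))"
    unfolding cspectrum_def by auto
  also have "\<dots> \<longleftrightarrow> (\<forall>\<mu>. ring_invertible (1 - cscale \<mu> x))"
  proof (intro iffI allI)
    fix \<mu> assume inv: "\<forall>l. l \<noteq> 0 \<longrightarrow> ring_invertible (1 - cscale (1 / l) x)"
    show "ring_invertible (1 - cscale \<mu> x)"
    proof (cases "\<mu> = 0")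
      case True
      then show ?thesis by (simp add: ring_invertibleI[of 1 1])
    next
      case False
      then show ?thesis using inv[rule_format, of "1 / \<mu>"] by simp
    qed
  qed simp
  finally show ?thesis .
qed

lemma topologically_nilpotent_imp_spectrum_subset_zero:
  fixes x :: "'a::cbanach_algebra_1"
  assumes "topologically_nilpotent x"
  shows "cspectrum x \<subseteq> {0}"
  unfolding spectrum_subset_zero_iff
proof
  fix \<mu>
  have "summable (\<lambda>n. norm (cscale \<mu> x ^ n))"
    using topologically_nilpotent_summable[OF assms, of "cmod \<mu>"]
    by (simp add: cscale_power norm_cscale norm_power)
  then show "ring_invertible (1 - cscale \<mu> x)"
    using neumann_series by (blast intro: ring_invertibleI)
qed

lemma topologically_nilpotent_one_minus_invertible:
  fixes t :: "'a::{real_normed_algebra_1, banach}"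
  assumes "topologically_nilpotent t"
  shows "ring_invertible (1 - t)"
  using neumann_series topologically_nilpotent_summable[OF assms, of 1]
  by (auto intro: ring_invertibleI)

lemma norm_inverse_diff_le:
  fixes x v x' v' :: "'a::real_normed_algebra_1"
  assumes "x * v = 1" "v' * x' = 1" and small: "norm v * norm (x - x') \<le> 1/2"
  shows "norm (v' - v) \<le> 2 * norm v * (norm v * norm (x - x'))"
proof -
  define D where "D = norm (v' - v)"
  define h where "h = norm v * norm (x - x')"
  have "v' * (x - x') * v = v' * (x * v) - (v' * x') * v" by (simp add: algebra_simps)
  then have "v' - v = v' * (x - x') * v" using assms(1,2) by simp
  then have "D \<le> norm (v' * (x - x')) * norm v" unfolding D_def by (simp add: norm_mult_ineq)
  also have "\<dots> \<le> norm v' * norm (x - x') * norm v" by (intro mult_right_mono norm_mult_ineq) simp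
  also have "\<dots> = norm v' * h" unfolding h_def by simp
  also have "\<dots> \<le> (norm v + D) * h"
    using norm_triangle_ineq[of v "v' - v"] unfolding D_def h_def
    by (intro mult_right_mono) auto
  finally have "D * (1 - h) \<le> norm v * h" by (simp add: algebra_simps)
  moreover have "D \<ge> 0" "1/2 \<le> 1 - h" using small unfolding D_def h_def by auto
  ultimately have "D * (1/2) \<le> norm v * h"
    by (meson mult_left_mono order_trans)
  then show ?thesis unfolding D_def h_def by simp
qed

text \<open>We normalise the resolvent as \<open>(1 - \<mu> x)\<inverse>\<close> rather than \<open>(x - \<lambda>)\<inverse>\<close>: it is then defined on all
  of \<open>\<complex>\<close> exactly when the spectrum of \<open>x\<close> is contained in \<open>{0}\<close>.\<close>

definition resolvent :: "'a::calg_1 \<Rightarrow> complex \<Rightarrow> 'a" where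
  "resolvent x \<mu> = ring_inverse (1 - cscale \<mu> x)"

lemma mult_resolvent:
  assumes "cspectrum x \<subseteq> {0}"
  shows "(1 - cscale \<mu> x) * resolvent x \<mu> = 1" "resolvent x \<mu> * (1 - cscale \<mu> x) = 1"
  using mult_ring_inverse assms unfolding resolvent_def spectrum_subset_zero_iff by blast+

lemma isCont_resolvent:
  fixes x :: "'a::cbanach_algebra_1"
  assumes "cspectrum x \<subseteq> {0}"
  shows "isCont (resolvent x) \<mu>"
proof -
  define K where "K = norm (resolvent x \<mu>)"
  define bound where "bound \<mu>' = K * (cmod (\<mu>' - \<mu>) * norm x)" for \<mu>'
  have bound_lim: "(bound \<longlongrightarrow> 0) (at \<mu>)"
    unfolding bound_def by (intro tendsto_eq_intros) auto
  have "\<forall>\<^sub>F \<mu>' in at \<mu>. bound \<mu>' < 1/2"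
    using order_tendstoD(2)[OF bound_lim, of "1/2"] by simp
  then have "\<forall>\<^sub>F \<mu>' in at \<mu>. norm (resolvent x \<mu>' - resolvent x \<mu>) \<le> 2 * K * bound \<mu>'"
  proof eventually_elim
    case (elim \<mu>')
    have "norm ((1 - cscale \<mu> x) - (1 - cscale \<mu>' x)) = cmod (\<mu>' - \<mu>) * norm x"
      by (simp add: cscale_diff_left[symmetric] norm_cscale)
    then show ?case
      using norm_inverse_diff_le[OF mult_resolvent(1)[OF assms] mult_resolvent(2)[OF assms], of \<mu> \<mu>'] elim
      unfolding bound_def K_def by simp
  qed
  moreover have "((\<lambda>\<mu>'. 2 * K * bound \<mu>') \<longlongrightarrow> 0) (at \<mu>)"
    using tendsto_mult_right_zero[OF bound_lim] .
  ultimately have "((\<lambda>\<mu>'. resolvent x \<mu>' - resolvent x \<mu>) \<longlongrightarrow> 0) (at \<mu>)"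
    by (rule Lim_null_comparison)
  then show ?thesis unfolding isCont_def by (simp add: LIM_zero_iff)
qed

definition unit_root :: "nat \<Rightarrow> complex" where
  "unit_root n = exp (2 * of_real pi * \<i> / of_nat n)"

lemma unit_root_power: "unit_root n ^ j = exp (2 * of_real pi * \<i> * of_nat j / of_nat n)"
  unfolding unit_root_def exp_of_nat_mult[symmetric] by (simp add: field_simps)

lemma norm_unit_root_power [simp]: "cmod (unit_root n ^ k) = 1"
  unfolding unit_root_power by (simp add: norm_exp_eq_Re)

lemma unit_root_power_power_n: "n > 0 \<Longrightarrow> (unit_root n ^ k) ^ n = 1"
  unfolding unit_root_power using complex_root_unity[of n k] by simp

lemma sum_unit_root_powers:
  assumes "0 < j" "j < n"
  shows "(\<Sum>k<n. (unit_root n ^ k) ^ j) = 0"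
proof -
  define z where "z = unit_root n ^ j"
  have "z \<noteq> 1"
    unfolding z_def unit_root_power using complex_root_unity_eq_1[of n j] assms
    by (auto dest: dvd_imp_le)
  moreover have "z ^ n = 1"
    unfolding z_def using unit_root_power_power_n[of n j] assms by simp
  moreover have "(\<Sum>k<n. (unit_root n ^ k) ^ j) = (\<Sum>k<n. z ^ k)"
    unfolding z_def by (simp only: power_mult[symmetric] mult.commute)
  ultimately show ?thesis by (simp add: sum_gp_strict)
qed

text \<open>If \<open>g\<^sub>k = (1 - \<omega>\<^sup>k y)\<inverse>\<close> for the \<open>n\<close>-th roots of unity \<open>\<omega>\<^sup>k\<close>, then
  \<open>g\<^sub>k (1 - y\<^sup>n) = \<Sum>\<^sub>j\<^sub><\<^sub>n (\<omega>\<^sup>k y)\<^sup>j\<close>, and summing over \<open>k\<close> kills every term with \<open>0 < j\<close>.\<close>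

lemma inverse_one_minus_power_average:
  fixes y :: "'a::calg_1"
  assumes n: "n > 0"
    and g: "\<And>k. k < n \<Longrightarrow> (1 - cscale (unit_root n ^ k) y) * g k = 1"
      "\<And>k. k < n \<Longrightarrow> g k * (1 - cscale (unit_root n ^ k) y) = 1"
  shows "(1 - y ^ n) * cscale (1 / of_nat n) (\<Sum>k<n. g k) = 1"
    and "cscale (1 / of_nat n) (\<Sum>k<n. g k) * (1 - y ^ n) = 1"
proof -
  define y' where "y' k = cscale (unit_root n ^ k) y" for k
  define T where "T k = (\<Sum>j<n. y' k ^ j)" for k
  have y'_n: "y' k ^ n = y ^ n" for k
    unfolding y'_def cscale_power using unit_root_power_power_n[OF n] by (simp add: cscale_one)
  have gT: "g k * (1 - y ^ n) = T k" "(1 - y ^ n) * g k = T k" if "k < n" for k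
  proof -
    have "g k * (1 - y ^ n) = (g k * (1 - y' k)) * T k"
      unfolding T_def mult.assoc one_minus_times_geometric_sum y'_n ..
    then show "g k * (1 - y ^ n) = T k" using g(2)[OF that] unfolding y'_def by simp
    have "(1 - y ^ n) * g k = T k * ((1 - y' k) * g k)"
      unfolding T_def mult.assoc[symmetric] one_minus_times_geometric_sum y'_n ..
    then show "(1 - y ^ n) * g k = T k" using g(1)[OF that] unfolding y'_def by simp
  qed
  have "(\<Sum>k<n. T k) = (\<Sum>j<n. cscale (\<Sum>k<n. (unit_root n ^ k) ^ j) (y ^ j))"
    unfolding T_def y'_def cscale_power cscale_sum_left by (rule sum.swap)
  also have "\<dots> = (\<Sum>j<n. if j = 0 then cscale (of_nat n) 1 else 0)"
    by (intro sum.cong) (auto simp: sum_unit_root_powers)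
  also have "\<dots> = cscale (of_nat n) 1" using n by simp
  finally have sum_T: "cscale (1 / of_nat n) (\<Sum>k<n. T k) = 1"
    using n by (simp add: cscale_cscale cscale_one)
  show "(1 - y ^ n) * cscale (1 / of_nat n) (\<Sum>k<n. g k) = 1"
    using sum_T gT(2) by (simp add: mult_cscale_right sum_distrib_left)
  show "cscale (1 / of_nat n) (\<Sum>k<n. g k) * (1 - y ^ n) = 1"
    using sum_T gT(1) by (simp add: mult_cscale_left sum_distrib_right)
qed

lemma tendsto_power_norm_below:
  fixes x :: "'a::real_normed_algebra_1"
  assumes "\<forall>\<^sub>F n in sequentially. r ^ n * norm (x ^ n) \<le> 1" "0 \<le> \<rho>" "\<rho> < r"
  shows "(\<lambda>n. \<rho> ^ n * norm (x ^ n)) \<longlonglongrightarrow> 0"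
proof (rule Lim_null_comparison)
  show "(\<lambda>n. (\<rho> / r) ^ n) \<longlonglongrightarrow> 0" using assms(2,3) by (intro LIMSEQ_power_zero) auto
  show "\<forall>\<^sub>F n in sequentially. norm (\<rho> ^ n * norm (x ^ n)) \<le> (\<rho> / r) ^ n"
    using assms(1)
  proof eventually_elim
    case (elim n)
    have "norm (\<rho> ^ n * norm (x ^ n)) = (\<rho> / r) ^ n * (r ^ n * norm (x ^ n))"
      using assms(2,3) by (simp add: power_divide)
    also have "\<dots> \<le> (\<rho> / r) ^ n * 1" using elim assms(2,3) by (intro mult_left_mono) auto
    finally show ?case by simp
  qed
qed

definition resolvent_average :: "'a::calg_1 \<Rightarrow> nat \<Rightarrow> complex \<Rightarrow> 'a" where
  "resolvent_average x n \<mu> = cscale (1 / of_nat n) (\<Sum>k<n. resolvent x (unit_root n ^ k * \<mu>))"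

lemma mult_resolvent_average:
  assumes "cspectrum x \<subseteq> {0}" "n > 0"
  shows "(1 - cscale (\<mu> ^ n) (x ^ n)) * resolvent_average x n \<mu> = 1"
    and "resolvent_average x n \<mu> * (1 - cscale (\<mu> ^ n) (x ^ n)) = 1"
  using inverse_one_minus_power_average[OF assms(2), of "cscale \<mu> x"] mult_resolvent[OF assms(1)]
  unfolding resolvent_average_def cscale_power by (simp_all add: cscale_cscale)

lemma norm_resolvent_average_diff_le:
  fixes x :: "'a::cbanach_algebra_1"
  assumes "n > 0"
    and "\<And>k. k < n \<Longrightarrow>
      norm (resolvent x (unit_root n ^ k * \<mu>) - resolvent x (unit_root n ^ k * \<mu>')) \<le> \<epsilon>"
  shows "norm (resolvent_average x n \<mu> - resolvent_average x n \<mu>') \<le> \<epsilon>"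
proof -
  have "norm (resolvent_average x n \<mu> - resolvent_average x n \<mu>')
      = norm (\<Sum>k<n. resolvent x (unit_root n ^ k * \<mu>) - resolvent x (unit_root n ^ k * \<mu>')) / n"
    unfolding resolvent_average_def
    by (simp add: cscale_diff_right[symmetric] sum_subtractf norm_cscale norm_divide)
  also have "\<dots> \<le> (\<Sum>k<n. \<epsilon>) / n"
    using assms(2) by (intro divide_right_mono order_trans[OF norm_sum sum_mono]) auto
  finally show ?thesis using assms(1) by simp
qed

text \<open>Rickart's argument: \<open>resolvent_average x n \<rho>\<close> is close to \<open>1\<close> once \<open>\<rho>\<^sup>n x\<^sup>n\<close> is small,
  and uniform continuity of the resolvent keeps \<open>resolvent_average x n (\<rho> + \<delta>)\<close> close to it for
  all \<open>n\<close> at once, so that \<open>(\<rho> + \<delta>)\<^sup>n x\<^sup>n\<close> stays bounded.\<close>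

lemma resolvent_radius_step:
  fixes x :: "'a::cbanach_algebra_1"
  assumes x: "cspectrum x \<subseteq> {0}"
    and uc: "\<And>\<mu> \<mu>'. cmod \<mu> \<le> r \<Longrightarrow> cmod \<mu>' \<le> r \<Longrightarrow> cmod (\<mu>' - \<mu>) \<le> \<delta> \<Longrightarrow>
      norm (resolvent x \<mu>' - resolvent x \<mu>) \<le> 1/4"
    and \<rho>: "0 \<le> \<rho>" "\<rho> + \<delta> \<le> r" and \<delta>: "0 < \<delta>"
    and lim: "(\<lambda>n. \<rho> ^ n * norm (x ^ n)) \<longlonglongrightarrow> 0"
  shows "\<forall>\<^sub>F n in sequentially. (\<rho> + \<delta>) ^ n * norm (x ^ n) \<le> 1"
proof -
  define A where "A n r = resolvent_average x n (of_real r)" for n r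
  have A_close: "norm (A n \<rho> - A n (\<rho> + \<delta>)) \<le> 1/4" if "n > 0" for n
    unfolding A_def
  proof (intro norm_resolvent_average_diff_le[OF that] uc)
    fix k
    show "cmod (unit_root n ^ k * of_real (\<rho> + \<delta>)) \<le> r" "cmod (unit_root n ^ k * of_real \<rho>) \<le> r"
      using \<rho> \<delta> by (simp_all add: norm_mult del: of_real_add)
    show "cmod (unit_root n ^ k * of_real \<rho> - unit_root n ^ k * of_real (\<rho> + \<delta>)) \<le> \<delta>"
      using \<delta> by (simp add: right_diff_distrib[symmetric] norm_mult)
  qed
  have "\<forall>\<^sub>F n in sequentially. \<rho> ^ n * norm (x ^ n) < 1/8"
    using lim by (rule order_tendstoD) simp
  with eventually_gt_at_top[of 0]
  have "\<forall>\<^sub>F n in sequentially. n > 0 \<and> \<rho> ^ n * norm (x ^ n) < 1/8"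
    by (rule eventually_conj)
  then show ?thesis
  proof eventually_elim
    case (elim n)
    define h where "h r = cscale (of_real r ^ n) (x ^ n)" for r
    have norm_h: "norm (h r) = r ^ n * norm (x ^ n)" if "r \<ge> 0" for r
      unfolding h_def using that by (simp add: norm_cscale norm_power)
    have A: "(1 - h r) * A n r = 1" "A n r * (1 - h r) = 1" for r
      unfolding A_def h_def using mult_resolvent_average[OF x] elim by auto
    have "norm (1 - A n \<rho>) \<le> 1/4"
      using norm_inverse_diff_le[of 1 1 "A n \<rho>" "1 - h \<rho>"] A(2)[of \<rho>] elim norm_h \<rho>(1)
      by (simp add: norm_minus_commute)
    from norm_diff_triangle_le[OF this A_close] elim
    have "norm (1 - A n (\<rho> + \<delta>)) \<le> 1/2" by simp
    then have "norm (h (\<rho> + \<delta>)) \<le> 1"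
      using norm_inverse_diff_le[of 1 1 "1 - h (\<rho> + \<delta>)" "A n (\<rho> + \<delta>)"] A(1)[of "\<rho> + \<delta>"] by simp
    then show ?case using norm_h \<rho> \<delta> by simp
  qed
qed

lemma spectrum_subset_zero_imp_topologically_nilpotent:
  fixes x :: "'a::cbanach_algebra_1"
  assumes x: "cspectrum x \<subseteq> {0}"
  shows "topologically_nilpotent x"
  unfolding topologically_nilpotent_def
proof (intro allI impI)
  fix \<rho> :: real assume \<rho>: "\<rho> \<ge> 0"
  define r where "r = \<rho> + 1"
  have "uniformly_continuous_on (cball 0 r) (resolvent x)"
    by (intro compact_uniformly_continuous continuous_at_imp_continuous_on ballI
        isCont_resolvent[OF x] compact_cball)
  then obtain d where d: "d > 0"
    and d_uc: "\<And>\<mu> \<mu>'. \<mu> \<in> cball 0 r \<Longrightarrow> \<mu>' \<in> cball 0 r \<Longrightarrow> dist \<mu>' \<mu> < d \<Longrightarrow>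
      dist (resolvent x \<mu>') (resolvent x \<mu>) < 1/4"
    unfolding uniformly_continuous_on_def by (metis zero_less_divide_1_iff zero_less_numeral)
  define \<delta> where "\<delta> = min (d / 2) 1"
  have \<delta>: "0 < \<delta>" "\<delta> \<le> 1" unfolding \<delta>_def using d by auto
  have uc: "norm (resolvent x \<mu>' - resolvent x \<mu>) \<le> 1/4"
    if "cmod \<mu> \<le> r" "cmod \<mu>' \<le> r" "cmod (\<mu>' - \<mu>) \<le> \<delta>" for \<mu> \<mu>'
    using d_uc[of \<mu> \<mu>'] that d unfolding \<delta>_def by (simp add: dist_norm)
  \<comment> \<open>Climb from radius \<open>0\<close> to \<open>\<rho>\<close> in steps of \<open>\<delta> / 2\<close>; \<open>\<delta>\<close> does not depend on the step.\<close>
  define s where "s k = min (real k * \<delta> / 2) \<rho>" for k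
  have s: "0 \<le> s k" "s k + \<delta> \<le> r" "s (Suc k) < s k + \<delta>" for k
    unfolding s_def r_def using \<rho> \<delta> by (auto simp: min_def field_simps)
  have "(\<lambda>n. s k ^ n * norm (x ^ n)) \<longlonglongrightarrow> 0" for k
  proof (induct k)
    case 0
    show ?case by (rule LIMSEQ_imp_Suc) (simp add: s_def \<rho>)
  next
    case (Suc k)
    show ?case
      by (rule tendsto_power_norm_below[OF resolvent_radius_step[OF x uc s(1,2) \<delta>(1) Suc] s(1,3)])
  qed
  moreover obtain k where "\<rho> \<le> real k * \<delta> / 2"
    using real_arch_simple[of "2 * \<rho> / \<delta>"] \<delta> by (auto simp: field_simps)
  then have "s k = \<rho>" unfolding s_def by simp
  ultimately show "(\<lambda>n. \<rho> ^ n * norm (x ^ n)) \<longlonglongrightarrow> 0" by metis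
qed

theorem qnil_iff_topologically_nilpotent:
  "qnil (x::'a::cbanach_algebra_1) \<longleftrightarrow> topologically_nilpotent x"
proof
  assume "qnil x"
  then show "topologically_nilpotent x"
    unfolding qnil_def by (intro spectrum_subset_zero_imp_topologically_nilpotent) simp
next
  assume x: "topologically_nilpotent x"
  have "0 \<in> cspectrum x"
    using topologically_nilpotent_not_invertible[OF x] by (simp add: cspectrum_def)
  then show "qnil x"
    using topologically_nilpotent_imp_spectrum_subset_zero[OF x] unfolding qnil_def by blast
qed

lemma topologically_nilpotent_power_imp:
  fixes z :: "'a::cbanach_algebra_1"
  assumes "topologically_nilpotent (z ^ m)" "m > 0"
  shows "topologically_nilpotent z"
proof (rule spectrum_subset_zero_imp_topologically_nilpotent)
  have "ring_invertible (1 - cscale \<mu> z)" for \<mu>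
  proof -
    define y where "y = cscale \<mu> z"
    have "ring_invertible (1 - y ^ m)"
      using assms(1) topologically_nilpotent_imp_spectrum_subset_zero spectrum_subset_zero_iff
      unfolding y_def cscale_power by blast
    moreover have "1 - y ^ m = (1 - y) * (\<Sum>j<m. y ^ j)"
      "(1 - y) * (\<Sum>j<m. y ^ j) = (\<Sum>j<m. y ^ j) * (1 - y)"
      using one_minus_times_geometric_sum[of y m] by simp_all
    ultimately show ?thesis
      unfolding y_def[symmetric] using ring_invertible_commuting_factor by metis
  qed
  then show "cspectrum z \<subseteq> {0}" by (simp add: spectrum_subset_zero_iff)
qed

section \<open>Lifting idempotents\<close>

lemma gbinomial_minus_half_abs_le: "\<bar>(- 1/2 :: real) gchoose k\<bar> \<le> 1"
proof (induct k)
  case (Suc k)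
  define G G' where "G = (- 1/2 :: real) gchoose k" and "G' = (- 1/2 :: real) gchoose Suc k"
  have "real (Suc k) * G' = (- 1/2 - real k) * G"
    using gbinomial_mult_1[of "- 1/2 :: real" k] unfolding G_def G'_def by (simp add: algebra_simps)
  then have "\<bar>real (Suc k) * G'\<bar> = \<bar>(- 1/2 - real k) * G\<bar>" by (rule arg_cong)
  then have "real (Suc k) * \<bar>G'\<bar> = \<bar>- 1/2 - real k\<bar> * \<bar>G\<bar>" by (simp only: abs_mult abs_of_nat)
  also have "\<dots> \<le> real (Suc k) * 1"
    using Suc unfolding G_def by (intro mult_mono) (auto simp: abs_if)
  finally show ?case unfolding G'_def by (rule mult_left_le_imp_le) simp
qed simp

lemma gbinomial_minus_half_convolution:
  "(\<Sum>i\<le>m. ((- 1/2 :: real) gchoose i) * ((- 1/2) gchoose (m - i))) = (- 1) ^ m"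
proof -
  have "(\<Sum>i\<le>m. ((- 1/2 :: real) gchoose i) * ((- 1/2) gchoose (m - i))) = (- 1) gchoose m"
    using gbinomial_Vandermonde[of "- 1/2 :: real" "- 1/2" m] by (simp add: atLeast0AtMost)
  also have "\<dots> = (- 1) ^ m"
    using gbinomial_minus[of "1 :: real" m] binomial_gbinomial[of m m, where 'a = real] by simp
  finally show ?thesis .
qed

lemma summable_norm_scaleR_power:
  fixes t :: "'a::real_normed_algebra_1"
  assumes "topologically_nilpotent t" "\<And>k. \<bar>b k\<bar> \<le> 1"
  shows "summable (\<lambda>k. norm (scaleR (b k) (t ^ k)))"
proof (rule summable_comparison_test[OF _ topologically_nilpotent_summable[OF assms(1), of 1]])
  show "\<exists>N. \<forall>k\<ge>N. norm (norm (scaleR (b k) (t ^ k))) \<le> 1 ^ k * norm (t ^ k)"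
    using assms(2) by (auto intro!: exI[of _ 0] mult_left_le_one_le)
qed simp

definition inv_sqrt_series :: "'a::real_normed_algebra_1 \<Rightarrow> 'a" where
  "inv_sqrt_series t = (\<Sum>k. scaleR ((- 1/2) gchoose k) (t ^ k))"

lemma
  fixes t :: "'a::{real_normed_algebra_1, banach}"
  assumes t: "topologically_nilpotent t"
  shows inv_sqrt_series_in_bicommutant: "inv_sqrt_series t \<in> bicommutant {t}"
    and one_plus_times_inv_sqrt_series_square:
      "(1 + t) * (inv_sqrt_series t * inv_sqrt_series t) = 1"
proof -
  define c where "c k = (- 1/2 :: real) gchoose k" for k
  define w where "w = inv_sqrt_series t"
  have w_def': "w = (\<Sum>k. scaleR (c k) (t ^ k))" unfolding w_def inv_sqrt_series_def c_def ..
  have sw: "summable (\<lambda>k. norm (scaleR (c k) (t ^ k)))"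
    unfolding c_def by (intro summable_norm_scaleR_power t gbinomial_minus_half_abs_le)
  have t_in: "t \<in> bicommutant {t}" using subset_bicommutant by blast
  show "inv_sqrt_series t \<in> bicommutant {t}"
    unfolding w_def[symmetric] w_def'
    by (intro commutant_suminf summable_norm_cancel[OF sw] commutant_scaleR commutant_power t_in)
  have neg_power: "(- t) ^ m = scaleR ((- 1) ^ m) (t ^ m)" for m
    using scaleR_power[of "- 1" t m] by simp
  have "(\<Sum>i\<le>m. scaleR (c i) (t ^ i) * scaleR (c (m - i)) (t ^ (m - i))) = (- t) ^ m" for m
  proof -
    have "(\<Sum>i\<le>m. scaleR (c i) (t ^ i) * scaleR (c (m - i)) (t ^ (m - i)))
        = (\<Sum>i\<le>m. scaleR (c i * c (m - i)) (t ^ m))"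
      by (intro sum.cong) (simp_all add: power_add[symmetric])
    also have "\<dots> = scaleR (\<Sum>i\<le>m. c i * c (m - i)) (t ^ m)"
      by (simp only: scaleR_sum_left)
    also have "\<dots> = (- t) ^ m"
      unfolding c_def gbinomial_minus_half_convolution neg_power ..
    finally show ?thesis .
  qed
  then have "(\<lambda>m. (- t) ^ m) sums (w * w)"
    using Cauchy_product_sums[OF sw sw] unfolding w_def' by simp
  then have "(\<Sum>m. (- t) ^ m) = w * w" by (rule sums_unique[symmetric])
  moreover have "summable (\<lambda>m. norm ((- t) ^ m))"
    using summable_norm_scaleR_power[OF t, of "\<lambda>m. (- 1) ^ m"] unfolding neg_power
    by (simp add: power_abs)
  ultimately show "(1 + t) * (inv_sqrt_series t * inv_sqrt_series t) = 1"
    using neumann_series(1)[of "- t"] unfolding w_def by simp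
qed

lemma topologically_nilpotent_inv_sqrt_series_minus_one:
  fixes t :: "'a::{real_normed_algebra_1, banach}"
  assumes t: "topologically_nilpotent t"
  shows "topologically_nilpotent (inv_sqrt_series t - 1)"
proof -
  define c where "c k = (- 1/2 :: real) gchoose k" for k
  define w' where "w' = (\<Sum>k. scaleR (c (Suc k)) (t ^ k))"
  have sw: "summable (\<lambda>k. scaleR (c k) (t ^ k))" "summable (\<lambda>k. scaleR (c (Suc k)) (t ^ k))"
    unfolding c_def
    by (intro summable_norm_cancel[OF summable_norm_scaleR_power] t gbinomial_minus_half_abs_le)+
  have "(\<Sum>k. scaleR (c (Suc k)) (t ^ Suc k)) = inv_sqrt_series t - scaleR (c 0) (t ^ 0)"
    unfolding inv_sqrt_series_def c_def by (rule suminf_split_head[OF sw(1)[unfolded c_def]])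
  moreover have "(\<Sum>k. scaleR (c (Suc k)) (t ^ Suc k)) = t * w'"
    unfolding w'_def using suminf_mult[OF sw(2), of t] by simp
  moreover have "c 0 = 1" by (simp add: c_def)
  ultimately have w_minus_1: "inv_sqrt_series t - 1 = t * w'" by simp
  have t_in: "t \<in> bicommutant {t}" using subset_bicommutant by blast
  have "w' \<in> bicommutant {t}"
    unfolding w'_def by (intro commutant_suminf sw(2) commutant_scaleR commutant_power t_in)
  then have "t * w' = w' * t" using bicommutant_singleton_commute t_in by blast
  then show ?thesis
    unfolding w_minus_1 by (rule topologically_nilpotent_mult_commuting(1)[OF t])
qed

text \<open>With \<open>d = 2f - 1\<close> and \<open>t = -4(f - f\<^sup>2)\<close> we have \<open>d\<^sup>2 = 1 + t\<close>, so \<open>d w\<close> with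
  \<open>w = inv_sqrt_series t\<close> is an involution and \<open>e = (1 + d w) / 2\<close> an idempotent; moreover
  \<open>e - f = d (w - 1) / 2\<close>.\<close>

lemma idempotent_lifting:
  fixes f :: "'a::{real_normed_algebra_1, banach}"
  assumes r: "topologically_nilpotent (f - f * f)"
  obtains e where "e \<in> bicommutant {f}" "e * e = e" "topologically_nilpotent (e - f)"
proof -
  have f_in: "f \<in> bicommutant {f}" using subset_bicommutant by blast
  define t where "t = scaleR (- 4) (f - f * f)"
  have t_in: "t \<in> bicommutant {f}"
    unfolding t_def by (intro commutant_scaleR commutant_diff commutant_mult f_in)
  have t: "topologically_nilpotent t" unfolding t_def by (rule topologically_nilpotent_scaleR[OF r])
  define w where "w = inv_sqrt_series t"
  have w_in: "w \<in> bicommutant {t}" and w: "(1 + t) * (w * w) = 1"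
    and w1: "topologically_nilpotent (w - 1)"
    unfolding w_def using inv_sqrt_series_in_bicommutant one_plus_times_inv_sqrt_series_square
      topologically_nilpotent_inv_sqrt_series_minus_one t by blast+
  have w_in': "w \<in> bicommutant {f}" using bicommutant_singleton_subset[OF t_in] w_in by blast
  define d where "d = scaleR 2 f - 1"
  have d_in: "d \<in> bicommutant {f}"
    unfolding d_def by (intro commutant_scaleR commutant_diff commutant_one f_in)
  have dw_comm: "d * w = w * d" by (rule bicommutant_singleton_commute[OF d_in w_in'])
  have "scaleR 4 y = y + y + y + y" for y :: 'a
    using scaleR_add_left[of 2 2 y] by (simp add: scaleR_2 add.assoc)
  then have "d * d = 1 + t" unfolding d_def t_def by (simp add: algebra_simps scaleR_2)
  then have dw: "(d * w) * (d * w) = 1"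
    using w dw_comm by (simp add: mult.assoc) (metis mult.assoc)
  define e where "e = scaleR (1/2) (1 + d * w)"
  have "e \<in> bicommutant {f}"
    unfolding e_def by (intro commutant_scaleR commutant_add commutant_mult commutant_one d_in w_in')
  moreover have "e * e = e"
  proof -
    have "(1 + d * w) * (1 + d * w) = scaleR 2 (1 + d * w)"
      using dw by (simp add: algebra_simps scaleR_2)
    then show ?thesis unfolding e_def by simp
  qed
  moreover have "topologically_nilpotent (e - f)"
  proof -
    have "e - f = scaleR (1/2) ((w - 1) * d)"
      unfolding e_def d_def using dw_comm by (simp add: algebra_simps d_def)
    moreover have "topologically_nilpotent ((w - 1) * d)"
      using dw_comm by (intro topologically_nilpotent_mult_commuting(1)[OF w1]) (simp add: algebra_simps)
    ultimately show ?thesis using topologically_nilpotent_scaleR by simp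
  qed
  ultimately show ?thesis using that by blast
qed

section \<open>A characterisation of g\<pi>-Hirano invertibility\<close>

lemma gpi_hirano_imp_topologically_nilpotent:
  fixes a :: "'a::cbanach_algebra_1"
  assumes "gpi_hirano a"
  obtains n where "n > 0" "topologically_nilpotent (a - a ^ (n + 1))"
proof -
  obtain x n where x: "x * a * x = x" "a * x = x * a" and n: "n > 0"
    and "qnil (a - a ^ (n + 2) * x)"
    using assms unfolding gpi_hirano_def by blast
  define r where "r = a - a ^ (n + 2) * x"
  have r: "topologically_nilpotent r"
    using \<open>qnil (a - a ^ (n + 2) * x)\<close> unfolding r_def qnil_iff_topologically_nilpotent .
  define S where "S = {a, x}"
  have S: "s * t = t * s" if "s \<in> S" "t \<in> S" for s t using that x(2) unfolding S_def by auto
  have a_in: "a \<in> bicommutant S" and x_in: "x \<in> bicommutant S"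
    using subset_bicommutant[of S] unfolding S_def by auto
  define e where "e = a * x"
  have e_idem: "e * e = e" unfolding e_def using x(1) by (simp add: mult.assoc)
  have e_orth: "e * (1 - e) = 0" using e_idem by (simp add: right_diff_distrib)
  have "a ^ (n + 2) = a ^ (n + 1) * a" by (simp only: power_Suc2[symmetric]) simp
  then have r_e: "r = a - a ^ (n + 1) * e"
    unfolding r_def e_def by (simp add: mult.assoc)
  have r_1e: "r * (1 - e) = a * (1 - e)"
    unfolding r_e using e_orth by (simp add: left_diff_distrib mult.assoc)
  define w where "w = 1 - a ^ n * (1 - e)"
  have e_in: "e \<in> bicommutant S" unfolding e_def using a_in x_in by (rule commutant_mult)
  have r_in: "r \<in> bicommutant S"
    unfolding r_def by (intro commutant_diff commutant_mult commutant_power a_in x_in)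
  have "r * a ^ n = a ^ n * r" by (intro bicommutant_commute[OF S r_in] commutant_power a_in)
  then have "r * w = r - a ^ n * (r * (1 - e))"
    unfolding w_def by (simp add: right_diff_distrib mult.assoc[symmetric])
  also have "\<dots> = r - a ^ (n + 1) * (1 - e)"
    unfolding r_1e by (simp only: mult.assoc[symmetric] power_Suc2[symmetric] Suc_eq_plus1)
  also have "\<dots> = a - a ^ (n + 1)" unfolding r_e by (simp add: right_diff_distrib)
  finally have "a - a ^ (n + 1) = r * w" ..
  moreover have "r * w = w * r"
    unfolding w_def
    by (intro bicommutant_commute[OF S r_in] commutant_diff commutant_mult commutant_power
        commutant_one a_in e_in)
  ultimately show ?thesis
    using that n topologically_nilpotent_mult_commuting(1)[OF r] by simp
qed

lemma inner_inverse_of_idempotent: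
  fixes a e :: "'a::{real_normed_algebra_1, banach}"
  assumes e_in: "e \<in> bicommutant {a}" and e_idem: "e * e = e"
    and e_close: "topologically_nilpotent (e - a ^ Suc m)"
  obtains x where "x \<in> bicommutant {a}" "a * x = e" "e * x = x"
proof -
  have a_in: "a \<in> bicommutant {a}" using subset_bicommutant by blast
  have an_in: "a ^ Suc m \<in> bicommutant {a}" by (intro commutant_power a_in)
  define t where "t = e * (e - a ^ Suc m)"
  have t_in: "t \<in> bicommutant {a}" unfolding t_def by (intro commutant_mult commutant_diff e_in an_in)
  have "(e - a ^ Suc m) * e = e * (e - a ^ Suc m)"
    by (intro bicommutant_singleton_commute[of _ a] commutant_diff e_in an_in)
  then have "topologically_nilpotent t"
    unfolding t_def by (rule topologically_nilpotent_mult_commuting(2)[OF e_close])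
  then have inv: "ring_invertible (1 - t)" by (rule topologically_nilpotent_one_minus_invertible)
  define v where "v = ring_inverse (1 - t)"
  have v: "(1 - t) * v = 1" and v_in: "v \<in> bicommutant {a}"
    unfolding v_def using mult_ring_inverse[OF inv] t_in
    by (auto intro: commutant_ring_inverse[OF _ inv] commutant_diff commutant_one)
  have "e * (1 - t) = e * a ^ Suc m"
    unfolding t_def using e_idem by (simp add: right_diff_distrib mult.assoc[symmetric])
  also have "\<dots> = a ^ Suc m * e" by (rule bicommutant_singleton_commute[OF e_in an_in])
  finally have an_e: "a ^ Suc m * e = e * (1 - t)" ..
  define x where "x = a ^ m * (e * v)"
  have "x \<in> bicommutant {a}" unfolding x_def by (intro commutant_mult commutant_power a_in e_in v_in)
  moreover have "a * x = e"
  proof -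
    have "a * x = a ^ Suc m * e * v" unfolding x_def by (simp add: mult.assoc)
    also have "\<dots> = e * ((1 - t) * v)" unfolding an_e by (simp only: mult.assoc)
    finally show ?thesis using v by simp
  qed
  moreover have "e * x = x"
  proof -
    have "e * a ^ m = a ^ m * e" by (intro bicommutant_singleton_commute[of _ a] commutant_power a_in e_in)
    then show ?thesis unfolding x_def using e_idem by (metis mult.assoc)
  qed
  ultimately show ?thesis using that by blast
qed

lemma power_idempotent: "p * p = p \<Longrightarrow> n > 0 \<Longrightarrow> p ^ n = (p::'a::monoid_mult)"
proof (induct n)
  case (Suc n)
  then show ?case by (cases n) (simp_all add: power_commutes)
qed simp

lemma topologically_nilpotent_times_complement:
  fixes a e :: "'a::cbanach_algebra_1"
  assumes n: "n > 0" and e_in: "e \<in> bicommutant {a}" and e_idem: "e * e = e"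
    and e_close: "topologically_nilpotent (e - a ^ n)"
  shows "topologically_nilpotent (a * (1 - e))"
proof (rule topologically_nilpotent_power_imp[OF _ n])
  have a_in: "a \<in> bicommutant {a}" using subset_bicommutant by blast
  have an_in: "a ^ n \<in> bicommutant {a}" by (intro commutant_power a_in)
  have e1_in: "1 - e \<in> bicommutant {a}" by (intro commutant_diff commutant_one e_in)
  have "(a * (1 - e)) ^ n = a ^ n * (1 - e) ^ n"
    by (rule power_mult_commuting[OF bicommutant_singleton_commute[OF a_in e1_in]])
  also have "(1 - e) ^ n = 1 - e"
    using e_idem n by (intro power_idempotent) (simp_all add: algebra_simps)
  also have "a ^ n * (1 - e) = (e - a ^ n) * (e - 1)"
    using e_idem by (simp add: algebra_simps)
  finally have un: "(a * (1 - e)) ^ n = (e - a ^ n) * (e - 1)" .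
  have "(e - a ^ n) * (e - 1) = (e - 1) * (e - a ^ n)"
    by (intro bicommutant_singleton_commute[of _ a] commutant_diff commutant_one e_in an_in)
  then show "topologically_nilpotent ((a * (1 - e)) ^ n)"
    unfolding un by (rule topologically_nilpotent_mult_commuting(1)[OF e_close])
qed

lemma gpi_hirano_if_idempotent:
  fixes a e :: "'a::cbanach_algebra_1"
  assumes n: "n > 0" and s: "topologically_nilpotent (a - a ^ (n + 1))"
    and e_in: "e \<in> bicommutant {a}" and e_idem: "e * e = e"
    and e_close: "topologically_nilpotent (e - a ^ n)"
  shows "gpi_hirano a"
proof -
  obtain m where m: "n = Suc m" using n gr0_implies_Suc by blast
  obtain x where x_in: "x \<in> bicommutant {a}" and ax: "a * x = e" and ex: "e * x = x"
    using inner_inverse_of_idempotent[OF e_in e_idem] e_close unfolding m by blast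
  have a_in: "a \<in> bicommutant {a}" using subset_bicommutant by blast
  have xa: "a * x = x * a" by (rule bicommutant_singleton_commute[OF a_in x_in])
  have xax: "x * a * x = x" using ax ex xa by (metis mult.assoc)
  have "a ^ (n + 2) = a ^ (n + 1) * a" by (simp only: power_Suc2[symmetric]) simp
  then have "a - a ^ (n + 2) * x = a - a ^ (n + 1) * e" using ax by (simp add: mult.assoc)
  also have "\<dots> = a * (1 - e) + (a - a ^ (n + 1)) * e" by (simp add: algebra_simps)
  finally have decomp: "a - a ^ (n + 2) * x = a * (1 - e) + (a - a ^ (n + 1)) * e" .
  have s_in: "a - a ^ (n + 1) \<in> bicommutant {a}" by (intro commutant_diff commutant_power a_in)
  have "e * a = a * e" by (rule bicommutant_singleton_commute[OF e_in a_in])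
  then have ea: "e * (a * y) = a * (e * y)" for y by (simp only: mult.assoc[symmetric])
  have es: "e * (a - a ^ (n + 1)) = (a - a ^ (n + 1)) * e"
    by (rule bicommutant_singleton_commute[OF e_in s_in])
  have "topologically_nilpotent (a * (1 - e))"
    by (rule topologically_nilpotent_times_complement[OF n e_in e_idem e_close])
  moreover have "topologically_nilpotent ((a - a ^ (n + 1)) * e)"
    using es by (intro topologically_nilpotent_mult_commuting(1)[OF s]) simp
  moreover have "a * (1 - e) * ((a - a ^ (n + 1)) * e) = a * ((1 - e) * e) * (a - a ^ (n + 1))"
    by (simp only: mult.assoc es)
  moreover have "(a - a ^ (n + 1)) * e * (a * (1 - e)) = (a - a ^ (n + 1)) * a * (e * (1 - e))"
    by (simp only: mult.assoc ea)
  moreover have "(1 - e) * e = 0" "e * (1 - e) = 0"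
    using e_idem by (simp_all add: left_diff_distrib right_diff_distrib)
  ultimately have "qnil (a - a ^ (n + 2) * x)"
    unfolding decomp qnil_iff_topologically_nilpotent
    by (intro topologically_nilpotent_add_orthogonal) simp_all
  then show ?thesis unfolding gpi_hirano_def using xax xa n by blast
qed

lemma topologically_nilpotent_imp_gpi_hirano:
  fixes a :: "'a::cbanach_algebra_1"
  assumes n: "n > 0" and s: "topologically_nilpotent (a - a ^ (n + 1))"
  shows "gpi_hirano a"
proof -
  obtain m where m: "n = Suc m" using n gr0_implies_Suc by blast
  have a_in: "a \<in> bicommutant {a}" using subset_bicommutant by blast
  have an_in: "a ^ n \<in> bicommutant {a}" by (rule commutant_power[OF a_in])
  have "a ^ (n + 1) * a ^ m = a ^ n * a ^ n" "a * a ^ m = a ^ n"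
    unfolding power_add[symmetric] using m by simp_all
  then have "(a - a ^ (n + 1)) * a ^ m = a ^ n - a ^ n * a ^ n"
    by (simp only: left_diff_distrib)
  moreover have "(a - a ^ (n + 1)) * a ^ m = a ^ m * (a - a ^ (n + 1))"
    by (intro bicommutant_singleton_commute[of _ a] commutant_diff commutant_power a_in)
  ultimately have "topologically_nilpotent (a ^ n - a ^ n * a ^ n)"
    using topologically_nilpotent_mult_commuting(1)[OF s] by metis
  then obtain e where e_in: "e \<in> bicommutant {a ^ n}" and "e * e = e"
    and "topologically_nilpotent (e - a ^ n)"
    by (rule idempotent_lifting)
  moreover have "e \<in> bicommutant {a}" using bicommutant_singleton_subset[OF an_in] e_in by blast
  ultimately show ?thesis using gpi_hirano_if_idempotent[OF n s] by blast
qed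

theorem gpi_hirano_iff_topologically_nilpotent:
  "gpi_hirano (a::'a::cbanach_algebra_1) \<longleftrightarrow> (\<exists>n>0. topologically_nilpotent (a - a ^ (n + 1)))"
  using gpi_hirano_imp_topologically_nilpotent topologically_nilpotent_imp_gpi_hirano by metis

lemma topologically_nilpotent_diff_power_mult:
  fixes a :: "'a::real_normed_algebra_1"
  assumes "topologically_nilpotent (a - a ^ (n + 1))"
  shows "topologically_nilpotent (a - a ^ (n * k + 1))"
proof -
  have a_in: "a \<in> bicommutant {a}" using subset_bicommutant by blast
  have "(a - a ^ (n + 1)) * (\<Sum>j<k. a ^ (n * j)) = (\<Sum>j<k. a ^ (n * j)) * (a - a ^ (n + 1))"
    by (intro bicommutant_singleton_commute[of _ a] commutant_diff commutant_power commutant_sum a_in)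
  then show ?thesis
    using topologically_nilpotent_mult_commuting(1)[OF assms] diff_power_times_geometric_sum by metis
qed

section \<open>The Banach algebra of \<open>2 \<times> 2\<close> matrices\<close>

fun m11 :: "'a m2 \<Rightarrow> 'a" where "m11 (M2 a b c d) = a"
fun m12 :: "'a m2 \<Rightarrow> 'a" where "m12 (M2 a b c d) = b"
fun m21 :: "'a m2 \<Rightarrow> 'a" where "m21 (M2 a b c d) = c"
fun m22 :: "'a m2 \<Rightarrow> 'a" where "m22 (M2 a b c d) = d"

lemma m2_eta: "M2 (m11 x) (m12 x) (m21 x) (m22 x) = x"
  by (cases x) simp

lemma norm_mult_column_le:
  fixes a b c d e g :: "'a::real_normed_algebra"
  assumes "norm a + norm c \<le> N" "norm b + norm d \<le> N"
  shows "norm (a * e + b * g) + norm (c * e + d * g) \<le> N * (norm e + norm g)"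
proof -
  have "norm (a * e + b * g) + norm (c * e + d * g)
      \<le> (norm a * norm e + norm b * norm g) + (norm c * norm e + norm d * norm g)"
    by (intro add_mono order_trans[OF norm_triangle_ineq] norm_mult_ineq)
  also have "\<dots> = (norm a + norm c) * norm e + (norm b + norm d) * norm g"
    by (simp add: algebra_simps)
  also have "\<dots> \<le> N * norm e + N * norm g" using assms by (intro add_mono mult_right_mono) auto
  finally show ?thesis by (simp add: distrib_left)
qed

text \<open>The largest column sum of the norms of the entries, as for the operator norm on \<open>l\<^sup>1\<close>.\<close>

instantiation m2 :: (real_normed_algebra_1) real_normed_algebra_1
begin

fun scaleR_m2 :: "real \<Rightarrow> 'a m2 \<Rightarrow> 'a m2" where
  "scaleR_m2 r (M2 a b c d) = M2 (scaleR r a) (scaleR r b) (scaleR r c) (scaleR r d)"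

fun norm_m2 :: "'a m2 \<Rightarrow> real" where
  "norm_m2 (M2 a b c d) = max (norm a + norm c) (norm b + norm d)"

definition sgn_m2 :: "'a m2 \<Rightarrow> 'a m2" where
  "sgn_m2 x = scaleR (inverse (norm x)) x"

definition dist_m2 :: "'a m2 \<Rightarrow> 'a m2 \<Rightarrow> real" where
  "dist_m2 x y = norm (x - y)"

definition uniformity_m2 :: "('a m2 \<times> 'a m2) filter" where
  "uniformity_m2 = (INF e\<in>{0<..}. principal {(x, y). dist x y < e})"

definition open_m2 :: "'a m2 set \<Rightarrow> bool" where
  "open_m2 U = (\<forall>x\<in>U. \<forall>\<^sub>F (x', y) in uniformity. x' = x \<longrightarrow> y \<in> U)"

instance
proof
  fix x y :: "'a m2" and r s :: real and U :: "'a m2 set"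
  show "scaleR r (x + y) = scaleR r x + scaleR r y"
    by (cases x; cases y) (simp add: scaleR_add_right)
  show "scaleR (r + s) x = scaleR r x + scaleR s x"
    by (cases x) (simp add: scaleR_add_left)
  show "scaleR r (scaleR s x) = scaleR (r * s) x" by (cases x) simp
  show "scaleR 1 x = x" by (cases x) simp
  show "dist x y = norm (x - y)" by (simp add: dist_m2_def)
  show "sgn x = scaleR (inverse (norm x)) x" by (simp add: sgn_m2_def)
  show "uniformity = (INF e\<in>{0<..}. principal {(x, y :: 'a m2). dist x y < e})"
    by (simp add: uniformity_m2_def)
  show "open U = (\<forall>x\<in>U. \<forall>\<^sub>F (x', y) in uniformity. x' = x \<longrightarrow> y \<in> U)"
    by (simp add: open_m2_def)
  show "(norm x = 0) = (x = 0)"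
  proof (cases x)
    case (M2 a b c d)
    have "max p q = 0 \<longleftrightarrow> p = 0 \<and> q = 0" if "p \<ge> 0" "q \<ge> 0" for p q :: real
      using that by (auto simp: max_def)
    then show ?thesis using M2 by (auto simp: zero_m2_def add_nonneg_eq_0_iff)
  qed
  show "norm (x + y) \<le> norm x + norm y"
  proof (cases x; cases y)
    fix a b c d e f g h
    assume "x = M2 a b c d" "y = M2 e f g h"
    moreover have "norm (a + e) + norm (c + g) \<le> (norm a + norm c) + (norm e + norm g)"
      "norm (b + f) + norm (d + h) \<le> (norm b + norm d) + (norm f + norm h)"
      using norm_triangle_ineq[of a e] norm_triangle_ineq[of c g]
        norm_triangle_ineq[of b f] norm_triangle_ineq[of d h] by simp_all
    ultimately show ?thesis by (auto simp: max_def)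
  qed
  show "norm (scaleR r x) = \<bar>r\<bar> * norm x"
    by (cases x) (simp add: max_mult_distrib_left distrib_left)
  show "scaleR r x * y = scaleR r (x * y)"
    by (cases x; cases y) (simp add: scaleR_add_right)
  show "x * scaleR r y = scaleR r (x * y)"
    by (cases x; cases y) (simp add: scaleR_add_right)
  show "norm (x * y) \<le> norm x * norm y"
  proof (cases x; cases y)
    fix a b c d e f g h
    assume xy: "x = M2 a b c d" "y = M2 e f g h"
    define N where "N = max (norm a + norm c) (norm b + norm d)"
    have "norm (a * e + b * g) + norm (c * e + d * g) \<le> N * (norm e + norm g)"
      "norm (a * f + b * h) + norm (c * f + d * h) \<le> N * (norm f + norm h)"
      by (intro norm_mult_column_le; simp add: N_def)+
    moreover have "N * (norm e + norm g) \<le> N * norm y" "N * (norm f + norm h) \<le> N * norm y"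
      using xy by (auto simp: N_def le_max_iff_disj intro!: mult_left_mono)
    ultimately show ?thesis using xy by (simp add: N_def[symmetric])
  qed
  show "norm (1::'a m2) = 1" by (simp add: one_m2_def)
qed

end

lemma norm_M2_le: "norm (M2 a b c d) \<le> norm a + norm b + norm c + norm (d::'a::real_normed_algebra_1)"
  by (simp add: max_def)

lemma norm_entries_le_m2:
  fixes x :: "'a::real_normed_algebra_1 m2"
  shows "norm (m11 x) \<le> norm x" "norm (m12 x) \<le> norm x"
    "norm (m21 x) \<le> norm x" "norm (m22 x) \<le> norm x"
  by (cases x; simp add: le_max_iff_disj)+

lemma tendsto_M2:
  fixes f g h k :: "'b \<Rightarrow> 'a::real_normed_algebra_1"
  assumes "(f \<longlongrightarrow> a) F" "(g \<longlongrightarrow> b) F" "(h \<longlongrightarrow> c) F" "(k \<longlongrightarrow> d) F"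
  shows "((\<lambda>x. M2 (f x) (g x) (h x) (k x)) \<longlongrightarrow> M2 a b c d) F"
proof -
  have norm_diff: "((\<lambda>x. norm (u x - l)) \<longlongrightarrow> 0) F" if "(u \<longlongrightarrow> l) F" for u :: "'b \<Rightarrow> 'a" and l
    using that by (simp add: tendsto_norm_zero_iff LIM_zero_iff)
  have "\<forall>\<^sub>F x in F. norm (M2 (f x) (g x) (h x) (k x) - M2 a b c d)
      \<le> norm (f x - a) + norm (g x - b) + norm (h x - c) + norm (k x - d)"
    using norm_M2_le by (intro always_eventually allI) (simp del: norm_m2.simps)
  moreover have "((\<lambda>x. norm (f x - a) + norm (g x - b) + norm (h x - c) + norm (k x - d)) \<longlongrightarrow> 0) F"
    using tendsto_add[OF tendsto_add[OF tendsto_add]] norm_diff[OF assms(1)] norm_diff[OF assms(2)]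
      norm_diff[OF assms(3)] norm_diff[OF assms(4)]
    by fastforce
  ultimately have "((\<lambda>x. M2 (f x) (g x) (h x) (k x) - M2 a b c d) \<longlongrightarrow> 0) F"
    by (rule Lim_null_comparison)
  then show ?thesis by (rule LIM_zero_cancel)
qed

lemma Cauchy_nonexpansive_map:
  fixes X :: "nat \<Rightarrow> 'a::real_normed_vector"
  assumes X: "Cauchy X" and p: "\<And>x y. norm (p x - p y) \<le> norm (x - y)"
  shows "Cauchy (\<lambda>n. p (X n) :: 'b::real_normed_vector)"
proof (rule CauchyI)
  fix e :: real assume "0 < e"
  then obtain M where "\<forall>m\<ge>M. \<forall>n\<ge>M. norm (X m - X n) < e" using CauchyD[OF X] by blast
  then show "\<exists>M. \<forall>m\<ge>M. \<forall>n\<ge>M. norm (p (X m) - p (X n)) < e" using p le_less_trans by blast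
qed

instance m2 :: ("{real_normed_algebra_1, banach}") banach
proof
  fix X :: "nat \<Rightarrow> 'a m2" assume X: "Cauchy X"
  have "norm (p x - p y) \<le> norm (x - y)" if "p \<in> {m11, m12, m21, m22}" for p and x y :: "'a m2"
    using that norm_entries_le_m2[of "x - y"] by (cases x; cases y) auto
  then have "convergent (\<lambda>n. p (X n))" if "p \<in> {m11, m12, m21, m22}" for p
    using Cauchy_nonexpansive_map[OF X] that Cauchy_convergent by blast
  then obtain a b c d where "(\<lambda>n. m11 (X n)) \<longlonglongrightarrow> a" "(\<lambda>n. m12 (X n)) \<longlonglongrightarrow> b"
    "(\<lambda>n. m21 (X n)) \<longlonglongrightarrow> c" "(\<lambda>n. m22 (X n)) \<longlonglongrightarrow> d"
    unfolding convergent_def by (metis insertCI)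
  from tendsto_M2[OF this] show "convergent X" unfolding m2_eta convergent_def by blast
qed

instance m2 :: (cbanach_algebra_1) cbanach_algebra_1
proof
  fix x :: "'a m2" and r :: real and c :: complex
  show "scaleR r x = cscale (complex_of_real r) x"
    by (cases x) (simp add: scaleR_cscale)
  show "norm (cscale c x) = cmod c * norm x"
    by (cases x) (simp add: norm_cscale max_mult_distrib_left distrib_left)
qed

section \<open>Triangular matrices\<close>

definition triangular :: "'a::zero m2 \<Rightarrow> 'a \<Rightarrow> 'a \<Rightarrow> bool" where
  "triangular M a b \<longleftrightarrow> (\<exists>c. M = M2 a c 0 b) \<or> (\<exists>d. M = M2 a 0 d b)"

lemma upper_triangular_power: "\<exists>c'. M2 a c 0 b ^ n = M2 (a ^ n) c' 0 (b ^ n :: 'a::ring_1)"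
  by (induct n) (auto simp: one_m2_def)

lemma lower_triangular_power: "\<exists>d'. M2 a 0 d b ^ n = M2 (a ^ n) 0 d' (b ^ n :: 'a::ring_1)"
  by (induct n) (auto simp: one_m2_def)

lemma triangular_cases:
  assumes "triangular M a b"
  obtains c where "M = M2 a c 0 b" | d where "M = M2 a 0 d b"
  using assms unfolding triangular_def by blast

lemma triangular_power:
  fixes M :: "'a::ring_1 m2"
  assumes "triangular M a b"
  shows "triangular (M ^ n) (a ^ n) (b ^ n)"
  using assms
proof (cases rule: triangular_cases)
  case (1 c)
  then show ?thesis using upper_triangular_power[of a c b n] unfolding triangular_def by auto
next
  case (2 d)
  then show ?thesis using lower_triangular_power[of a d b n] unfolding triangular_def by auto
qed

lemma triangular_diff_power:
  fixes M :: "'a::ring_1 m2"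
  assumes "triangular M a b"
  shows "triangular (M - M ^ n) (a - a ^ n) (b - b ^ n)"
  using assms
proof (cases rule: triangular_cases)
  case (1 c)
  then show ?thesis using upper_triangular_power[of a c b n] unfolding triangular_def by auto
next
  case (2 d)
  then show ?thesis using lower_triangular_power[of a d b n] unfolding triangular_def by auto
qed

lemma triangular_diff_scalar:
  fixes M :: "'a::calg_1 m2"
  assumes "triangular M a b"
  shows "triangular (M - cscale l 1) (a - cscale l 1) (b - cscale l 1)"
proof -
  have "cscale l (1::'a m2) = M2 (cscale l 1) 0 0 (cscale l 1)" by (simp add: one_m2_def)
  with assms show ?thesis by (cases rule: triangular_cases) (simp_all add: triangular_def)
qed

lemma triangular_invertible:
  fixes M :: "'a::ring_1 m2"
  assumes "triangular M a b" "ring_invertible a" "ring_invertible b"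
  shows "ring_invertible M"
proof -
  obtain a' b' where a': "a * a' = 1" "a' * a = 1" and b': "b * b' = 1" "b' * b = 1"
    using assms(2,3) unfolding ring_invertible_def by blast
  have "ring_invertible (M2 a c 0 b)" for c
    using a' b' by (intro ring_invertibleI[of _ "M2 a' (- (a' * c * b')) 0 b'"])
      (simp_all add: one_m2_def mult.assoc[symmetric], simp_all add: mult.assoc)
  moreover have "ring_invertible (M2 a 0 d b)" for d
    using a' b' by (intro ring_invertibleI[of _ "M2 a' 0 (- (b' * d * a')) b'"])
      (simp_all add: one_m2_def mult.assoc[symmetric], simp_all add: mult.assoc)
  ultimately show ?thesis using assms(1) unfolding triangular_def by blast
qed

lemma topologically_nilpotent_triangular_iff:
  fixes M :: "'a::cbanach_algebra_1 m2"
  assumes M: "triangular M a b"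
  shows "topologically_nilpotent M \<longleftrightarrow> topologically_nilpotent a \<and> topologically_nilpotent b"
proof
  assume "topologically_nilpotent M"
  moreover have "norm (a ^ n) \<le> 1 ^ n * norm (M ^ n)" "norm (b ^ n) \<le> 1 ^ n * norm (M ^ n)" for n
    using triangular_power[OF M, of n] norm_entries_le_m2(1,4)[of "M ^ n"]
    unfolding triangular_def by auto
  ultimately show "topologically_nilpotent a \<and> topologically_nilpotent b"
    using topologically_nilpotent_le[of M 1 a] topologically_nilpotent_le[of M 1 b] by simp
next
  assume "topologically_nilpotent a \<and> topologically_nilpotent b"
  then have "cspectrum a \<subseteq> {0}" "cspectrum b \<subseteq> {0}"
    using topologically_nilpotent_imp_spectrum_subset_zero by blast+
  then have "cspectrum M \<subseteq> {0}"
    using triangular_invertible[OF triangular_diff_scalar[OF M]] unfolding cspectrum_def by blast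
  then show "topologically_nilpotent M" by (rule spectrum_subset_zero_imp_topologically_nilpotent)
qed

lemma qnil_triangular_iff:
  fixes M :: "'a::cbanach_algebra_1 m2"
  shows "triangular M a b \<Longrightarrow> qnil M \<longleftrightarrow> qnil a \<and> qnil b"
  unfolding qnil_iff_topologically_nilpotent by (rule topologically_nilpotent_triangular_iff)

text \<open>The exponents for \<open>a\<close> and \<open>b\<close> may differ; their product works for both.\<close>

lemma gpi_hirano_triangular_iff:
  fixes M :: "'a::cbanach_algebra_1 m2"
  assumes M: "triangular M a b"
  shows "gpi_hirano M \<longleftrightarrow> gpi_hirano a \<and> gpi_hirano b"
proof -
  have diff: "topologically_nilpotent (M - M ^ k) \<longleftrightarrow>
      topologically_nilpotent (a - a ^ k) \<and> topologically_nilpotent (b - b ^ k)" for k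
    by (rule topologically_nilpotent_triangular_iff[OF triangular_diff_power[OF M]])
  show ?thesis
  proof
    assume "gpi_hirano M"
    then show "gpi_hirano a \<and> gpi_hirano b"
      unfolding gpi_hirano_iff_topologically_nilpotent diff by blast
  next
    assume "gpi_hirano a \<and> gpi_hirano b"
    then obtain n m where "n > 0" "m > 0" "topologically_nilpotent (a - a ^ (n + 1))"
      "topologically_nilpotent (b - b ^ (m + 1))"
      unfolding gpi_hirano_iff_topologically_nilpotent by blast
    then have "n * m > 0" "topologically_nilpotent (a - a ^ (n * m + 1))"
      "topologically_nilpotent (b - b ^ (n * m + 1))"
      using topologically_nilpotent_diff_power_mult[of a n m] topologically_nilpotent_diff_power_mult[of b m n]
      by (simp_all add: mult.commute)
    then show "gpi_hirano M" unfolding gpi_hirano_iff_topologically_nilpotent diff by blast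
  qed
qed

theorem lemma4p5:
  fixes a b c d :: "'a::cbanach_algebra_1" and M :: "'a m2"
  assumes "M = M2 a c 0 b \<or> M = M2 a 0 d b"
  shows "((qnil a \<and> qnil b) \<longleftrightarrow> qnil M)
     \<and> ((gpi_hirano a \<and> gpi_hirano b) \<longleftrightarrow> gpi_hirano M)"
proof -
  have "triangular M a b" using assms unfolding triangular_def by blast
  then show ?thesis using qnil_triangular_iff gpi_hirano_triangular_iff by blast
qed

end
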